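(* For all integers $k > d \geq 1$ and every $\varepsilon > 0$ there exists $\beta_0 > 0$ such that for every $0 < \beta \leq \beta_0$ there exists $\rho_0 > 0$ such that for every $0 < \rho \leq \rho_0$ there exists $n_0$ such that the following holds for all $n \geq n_0$. Let $H$ be a $k$-graph on $n$ vertices with $\delta_d(H) \geq (1/2 + \varepsilon)\binom{n-d}{k-d}$. Then there exists a set $\mathcal{A}$ of at most $\beta n$ pairwise vertex-disjoint absorbing tuples of $H$ such that for every ordered $k$-tuple $(w, w_1, \dots, w_{k-1})$ of distinct vertices of $H$ we have $|A(w, w_1, \dots, w_{k-1}) \cap \mathcal{A}| \geq \rho n$.
   Context: $\delta_d(H)$ is the minimum over $d$-subsets $S \subseteq V(H)$ of the number of edges containing $S$. For vertices $x, y$ of a $k$-graph $H$, an $(x,y)$-diamond is a pair of edges $e, f$ of $H$ with $|e \cap f| = k-1$, $x \in e \setminus f$ and $y \in f \setminus e$; the edge $f$ (the one containing $y$) is called the half-diamond of this diamond containing $y$. For an ordered $k$-tuple $(w, w_1, \dots, w_{k-1})$ of distinct vertices, an absorbing tuple for it is a tuple $(f_1, \dots, f_{k-1})$ of edges of $H$ such that there are vertices $v_1,\dots,v_{k-1}$ with: for each $i$, $f_i$ is the half-diamond containing $v_i$ of some $(w_i, v_i)$-diamond; the edges $f_1, \dots, f_{k-1}$ are pairwise vertex-disjoint; and $\{w, v_1, \dots, v_{k-1}\} \in E(H)$. $A(w, w_1,\dots,w_{k-1})$ is the set of all absorbing tuples for $(w, w_1, \dots, w_{k-1})$. Two absorbing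 tuples are vertex-disjoint if the unions of their edges are disjoint. *)

theory Defs
  imports Complex_Main
begin

definition kgraph :: "nat \<Rightarrow> 'a set \<Rightarrow> 'a set set \<Rightarrow> bool" where
  "kgraph k V E \<longleftrightarrow> finite V \<and> (\<forall>e\<in>E. e \<subseteq> V \<and> card e = k)"

definition min_deg :: "'a set \<Rightarrow> 'a set set \<Rightarrow> nat \<Rightarrow> nat" where
  "min_deg V E d = Min {card {e \<in> E. S \<subseteq> e} | S. S \<subseteq> V \<and> card S = d}"

definition diamond :: "nat \<Rightarrow> 'a set set \<Rightarrow> 'a \<Rightarrow> 'a \<Rightarrow> 'a set \<Rightarrow> 'a set \<Rightarrow> bool" where
  "diamond k E x y e f \<longleftrightarrow> e \<in> E \<and> f \<in> E \<and> card (e \<inter> f) = k - 1 \<and>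
     x \<in> e - f \<and> y \<in> f - e"

text \<open>Absorbing tuple (f_1,...,f_{k-1}) (list of length k-1) for the ordered
  k-tuple (w, w_1, ..., w_{k-1}) (ws = [w_1,...,w_{k-1}]).\<close>
definition absorbing :: "nat \<Rightarrow> 'a set set \<Rightarrow> 'a \<Rightarrow> 'a list \<Rightarrow> 'a set list \<Rightarrow> bool" where
  "absorbing k E w ws fs \<longleftrightarrow> length fs = k - 1 \<and> set fs \<subseteq> E \<and>
     (\<exists>vs. length vs = k - 1 \<and>
        (\<forall>i < k - 1. \<exists>e. diamond k E (ws ! i) (vs ! i) e (fs ! i)) \<and>
        (\<forall>i < k - 1. \<forall>j < k - 1. i \<noteq> j \<longrightarrow> fs ! i \<inter> fs ! j = {}) \<and>
        insert w (set vs) \<in> E)"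

definition absorbing_set :: "nat \<Rightarrow> 'a set set \<Rightarrow> 'a \<Rightarrow> 'a list \<Rightarrow> 'a set list set" where
  "absorbing_set k E w ws = {fs. absorbing k E w ws fs}"

definition ordered_tuple :: "nat \<Rightarrow> 'a set \<Rightarrow> 'a \<Rightarrow> 'a list \<Rightarrow> bool" where
  "ordered_tuple k V w ws \<longleftrightarrow> length ws = k - 1 \<and> distinct (w # ws) \<and> set (w # ws) \<subseteq> V"

definition absorbing_tuple_of :: "nat \<Rightarrow> 'a set \<Rightarrow> 'a set set \<Rightarrow> 'a set list \<Rightarrow> bool" where
  "absorbing_tuple_of k V E fs \<longleftrightarrow>
     (\<exists>w ws. ordered_tuple k V w ws \<and> absorbing k E w ws fs)"

definition tuples_vertex_disjoint :: "'a set list set \<Rightarrow> bool" where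
  "tuples_vertex_disjoint \<A> \<longleftrightarrow>
     (\<forall>T\<in>\<A>. \<forall>T'\<in>\<A>. T \<noteq> T' \<longrightarrow> \<Union>(set T) \<inter> \<Union>(set T') = {})"

end

(* Every vertex lies in at least (1/2 + eps) C(n-1,k-1) edges, so any two vertices w, v have
   at least 2 eps C(n-1,k-1) - O(n^(k-2)) common link sets: (k-1)-sets S such that S + w and
   S + v are both edges, i.e. form a (w,v)-diamond whose half containing v is S + v.  Hence for
   every ordered k-tuple (w, w_1, ..., w_(k-1)) and every set U of O(beta n) used vertices, a
   fixed fraction gamma of all n^((k-1)k) pairs (vs, Ss) encode an absorbing tuple for it that
   avoids U: complete w to an edge w + vs, then pick each S_i in the common link of w_i and v_i,
   avoiding everything chosen so far.
   Instead of sampling tuples at random we choose them greedily, minimising the potential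
   sum_x 2^(-h x), where h x counts the chosen tuples absorbing the k-tuple x.  By averaging over
   the candidates, each step multiplies the potential by at most 1 - gamma/2, so after beta n
   steps it is below 2^(-rho n), which forces h x >= rho n for every x. *)

theory Submission
  imports Defs "HOL-Real_Asymp.Real_Asymp"
begin

lemma card_supersets_of_card:
  assumes "finite V" "A \<subseteq> V" "card A \<le> j"
  shows "card {S. S \<subseteq> V \<and> card S = j \<and> A \<subseteq> S} = (card V - card A) choose (j - card A)"
proof -
  have fA: "finite A" using assms finite_subset by blast
  have "bij_betw (\<lambda>S. S - A) {S. S \<subseteq> V \<and> card S = j \<and> A \<subseteq> S} {T. T \<subseteq> V - A \<and> card T = j - card A}"
  proof (rule bij_betw_byWitness[where f'="\<lambda>T. T \<union> A"])
    have "card (T \<union> A) = j" if "T \<subseteq> V - A" "card T = j - card A" for T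
      using that assms fA finite_subset[OF that(1)] by (subst card_Un_disjoint) auto
    then show "(\<lambda>T. T \<union> A) ` {T. T \<subseteq> V - A \<and> card T = j - card A} \<subseteq> {S. S \<subseteq> V \<and> card S = j \<and> A \<subseteq> S}"
      using assms by auto
  qed (use fA in \<open>auto simp: card_Diff_subset\<close>)
  then have "card {S. S \<subseteq> V \<and> card S = j \<and> A \<subseteq> S} = card {T. T \<subseteq> V - A \<and> card T = j - card A}"
    by (rule bij_betw_same_card)
  also have "\<dots> = card (V - A) choose (j - card A)" using assms by (intro n_subsets) auto
  finally show ?thesis using assms fA by (simp add: card_Diff_subset)
qed

lemma card_subsets_meeting_le:
  assumes "finite V" "finite Y" "1 \<le> j"
  shows "card {S. S \<subseteq> V \<and> card S = j \<and> S \<inter> Y \<noteq> {}} \<le> card Y * ((card V - 1) choose (j - 1))"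
proof -
  have count_through: "card {S. S \<subseteq> V \<and> card S = j \<and> y \<in> S} \<le> (card V - 1) choose (j - 1)" for y
  proof (cases "y \<in> V")
    case True
    then show ?thesis using card_supersets_of_card[of V "{y}" j] assms by simp
  next
    case False
    then have "{S. S \<subseteq> V \<and> card S = j \<and> y \<in> S} = {}" by auto
    then show ?thesis by (simp only: card.empty zero_le)
  qed
  have "card {S. S \<subseteq> V \<and> card S = j \<and> S \<inter> Y \<noteq> {}}
      \<le> card (\<Union>y\<in>Y. {S. S \<subseteq> V \<and> card S = j \<and> y \<in> S})"
    by (intro card_mono) (use assms in \<open>auto intro: finite_subset[of _ "Pow V"]\<close>)
  also have "\<dots> \<le> (\<Sum>y\<in>Y. card {S. S \<subseteq> V \<and> card S = j \<and> y \<in> S})"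
    using assms by (intro card_UN_le)
  also have "\<dots> \<le> (\<Sum>y\<in>Y. (card V - 1) choose (j - 1))"
    by (intro sum_mono count_through)
  finally show ?thesis by simp
qed

lemma pow_le_pow_mult_binomial:
  assumes "m \<le> N"
  shows "real N ^ m \<le> real m ^ m * real (N choose m)"
proof (cases "m = 0")
  case False
  have "real m ^ m * (real N / real m) ^ m \<le> real m ^ m * real (N choose m)"
    using binomial_ge_n_over_k_pow_k[OF assms] by (intro mult_left_mono) auto
  then show ?thesis using False by (simp add: power_divide)
qed simp

lemma scaled_pow_le_binomial:
  assumes "1 \<le> m" "m < N"
  shows "(real N / (2 * real m)) ^ m \<le> real ((N - 1) choose m)"
proof -
  have "real N / (2 * real m) \<le> real (N - 1) / real m"
    using assms by (simp add: field_simps of_nat_diff)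
  then have "(real N / (2 * real m)) ^ m \<le> (real (N - 1) / real m) ^ m"
    by (intro power_mono) auto
  also have "\<dots> \<le> real ((N - 1) choose m)"
    using assms by (intro binomial_ge_n_over_k_pow_k) simp
  finally show ?thesis .
qed

lemma min_deg_le:
  assumes "finite V" "S \<subseteq> V" "card S = d"
  shows "min_deg V E d \<le> card {e \<in> E. S \<subseteq> e}"
proof -
  have "finite {S. S \<subseteq> V \<and> card S = d}" using assms by (auto intro: finite_subset[of _ "Pow V"])
  then show ?thesis
    unfolding min_deg_def using assms by (intro Min_le) auto
qed

lemma sum_codegrees_through_vertex:
  assumes "kgraph k V E" "w \<in> V" "1 \<le> d"
  shows "(\<Sum>S\<in>{S. S \<subseteq> V \<and> card S = d \<and> w \<in> S}. card {e \<in> E. S \<subseteq> e})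
       = card {e \<in> E. w \<in> e} * ((k - 1) choose (d - 1))"
proof -
  let ?D = "{S. S \<subseteq> V \<and> card S = d \<and> w \<in> S}"
  have fin: "finite V" "finite E" "finite ?D"
    using assms(1) unfolding kgraph_def by (auto intro: finite_subset[of _ "Pow V"])
  have through_edge: "card {S \<in> ?D. S \<subseteq> e} = (if w \<in> e then (k - 1) choose (d - 1) else 0)"
    if "e \<in> E" for e
  proof -
    have e: "e \<subseteq> V" "card e = k" "finite e"
      using assms(1) that fin(1) unfolding kgraph_def by (auto intro: finite_subset)
    show ?thesis
    proof (cases "w \<in> e")
      case True
      then have "{S \<in> ?D. S \<subseteq> e} = {S. S \<subseteq> e \<and> card S = d \<and> {w} \<subseteq> S}" using e by auto
      then show ?thesis using True e card_supersets_of_card[of e "{w}" d] assms(3) by simp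
    next
      case False
      then have "{S \<in> ?D. S \<subseteq> e} = {}" by auto
      then show ?thesis using False by (simp only: card.empty if_False)
    qed
  qed
  have "(\<Sum>S\<in>?D. card {e \<in> E. S \<subseteq> e}) = (\<Sum>S\<in>?D. \<Sum>e\<in>E. if S \<subseteq> e then 1 else 0)"
    using fin by (simp add: sum.If_cases Int_def)
  also have "\<dots> = (\<Sum>e\<in>E. card {S \<in> ?D. S \<subseteq> e})"
    using fin by (subst sum.swap) (simp add: sum.If_cases Int_def)
  also have "\<dots> = (\<Sum>e\<in>E. if w \<in> e then (k - 1) choose (d - 1) else 0)"
    using through_edge by (intro sum.cong) auto
  also have "\<dots> = card {e \<in> E. w \<in> e} * ((k - 1) choose (d - 1))"
    using fin by (simp add: sum.If_cases Int_def)
  finally show ?thesis .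
qed

lemma choice_sequences_Suc:
  "{xs. length xs = Suc m \<and> (\<forall>i<Suc m. xs ! i \<in> F (take i xs))}
     = (\<lambda>(xs, y). xs @ [y]) ` Sigma {xs. length xs = m \<and> (\<forall>i<m. xs ! i \<in> F (take i xs))} F"
proof -
  let ?P = "\<lambda>m. {xs. length xs = m \<and> (\<forall>i<m. xs ! i \<in> F (take i xs))}"
  show ?thesis
  proof (intro set_eqI iffI)
    fix zs assume zs: "zs \<in> ?P (Suc m)"
    then obtain xs y where zxy: "zs = xs @ [y]" by (cases zs rule: rev_cases) auto
    have "length xs = m" using zs zxy by simp
    moreover have "xs ! i \<in> F (take i xs)" if "i < m" for i
      using zs zxy that \<open>length xs = m\<close> by (auto simp: nth_append dest!: spec[of _ i])
    moreover have "y \<in> F xs" using zs zxy \<open>length xs = m\<close> by (auto dest!: spec[of _ m])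
    ultimately show "zs \<in> (\<lambda>(xs, y). xs @ [y]) ` Sigma (?P m) F" using zxy by force
  next
    fix zs assume "zs \<in> (\<lambda>(xs, y). xs @ [y]) ` Sigma (?P m) F"
    then obtain xs y where "zs = xs @ [y]" "xs \<in> ?P m" "y \<in> F xs" by auto
    then show "zs \<in> ?P (Suc m)" by (auto simp: nth_append less_Suc_eq)
  qed
qed

lemma card_choice_sequences_ge:
  fixes F :: "'a list \<Rightarrow> 'a set" and b :: real
  assumes fin: "finite B" and sub: "\<And>xs. F xs \<subseteq> B" and b: "0 \<le> b"
    and choices: "\<And>xs. length xs < m \<Longrightarrow> (\<forall>i<length xs. xs ! i \<in> F (take i xs)) \<Longrightarrow> b \<le> card (F xs)"
  shows "b ^ m \<le> card {xs. length xs = m \<and> (\<forall>i<m. xs ! i \<in> F (take i xs))}"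
  using choices
proof (induction m)
  case 0
  have "{xs. length xs = 0 \<and> (\<forall>i<0. xs ! i \<in> F (take i xs))} = {[]}" by auto
  then show ?case by simp
next
  case (Suc m)
  let ?P = "\<lambda>m. {xs. length xs = m \<and> (\<forall>i<m. xs ! i \<in> F (take i xs))}"
  have "?P m \<subseteq> {xs. set xs \<subseteq> B \<and> length xs = m}"
    using sub by (fastforce simp: in_set_conv_nth)
  then have finP: "finite (?P m)"
    using finite_lists_length_eq[OF fin] by (rule finite_subset)
  have "?P (Suc m) = (\<lambda>(xs, y). xs @ [y]) ` Sigma (?P m) F" by (rule choice_sequences_Suc)
  moreover have "inj_on (\<lambda>(xs, y). xs @ [y]) (Sigma (?P m) F)" by (auto simp: inj_on_def)
  ultimately have "card (?P (Suc m)) = card (Sigma (?P m) F)" by (simp add: card_image)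
  also have "\<dots> = (\<Sum>xs\<in>?P m. card (F xs))"
    using finP fin sub by (intro card_SigmaI) (auto intro: finite_subset)
  finally have "real (card (?P (Suc m))) = (\<Sum>xs\<in>?P m. real (card (F xs)))" by simp
  moreover have "(\<Sum>xs\<in>?P m. b) \<le> (\<Sum>xs\<in>?P m. real (card (F xs)))"
    using Suc.prems by (intro sum_mono) auto
  moreover have "b ^ m * b \<le> real (card (?P m)) * b"
    using Suc b by (intro mult_right_mono) auto
  ultimately show ?case by (simp add: mult.commute)
qed

lemma exists_potential_decrease:
  fixes h :: "'x \<Rightarrow> nat" and \<gamma> :: real
  assumes fC: "finite C" and ne: "C \<noteq> {}"
    and sub: "\<And>x. x \<in> X \<Longrightarrow> good x \<subseteq> C"
    and dens: "\<And>x. x \<in> X \<Longrightarrow> \<gamma> * card C \<le> card (good x)"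
  shows "\<exists>c\<in>C. (\<Sum>x\<in>X. (1/2::real) ^ (h x + (if c \<in> good x then 1 else 0)))
                 \<le> (1 - \<gamma>/2) * (\<Sum>x\<in>X. (1/2) ^ h x)"
proof (rule ccontr)
  assume "\<not> ?thesis"
  then have "(\<Sum>c\<in>C. (1 - \<gamma>/2) * (\<Sum>x\<in>X. (1/2::real) ^ h x))
      < (\<Sum>c\<in>C. \<Sum>x\<in>X. (1/2) ^ (h x + (if c \<in> good x then 1 else 0)))"
    using fC ne by (intro sum_strict_mono) auto
  also have "\<dots> = (\<Sum>x\<in>X. \<Sum>c\<in>C. (1/2) ^ h x * (1 - (if c \<in> good x then 1/2 else 0)))"
    by (subst sum.swap) (auto simp: power_add intro!: sum.cong)
  also have "\<dots> = (\<Sum>x\<in>X. (1/2) ^ h x * (card C - card (good x) / 2))"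
    using sub fC by (intro sum.cong refl)
      (simp add: sum_subtractf sum_distrib_left[symmetric] sum.If_cases Int_absorb1)
  also have "\<dots> \<le> (\<Sum>x\<in>X. (1/2) ^ h x * (card C * (1 - \<gamma>/2)))"
    using dens by (intro sum_mono mult_left_mono) (auto simp: algebra_simps)
  also have "\<dots> = (\<Sum>c\<in>C. (1 - \<gamma>/2) * (\<Sum>x\<in>X. (1/2::real) ^ h x))"
    by (simp add: sum_distrib_left sum_distrib_right algebra_simps)
  finally show False by simp
qed

lemma tuples_vertex_disjoint_insert:
  assumes "tuples_vertex_disjoint \<A>" "\<Union>(set T) \<inter> (\<Union>T'\<in>\<A>. \<Union>(set T')) = {}"
  shows "tuples_vertex_disjoint (insert T \<A>)"
  using assms unfolding tuples_vertex_disjoint_def by blast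

lemma diamond_insertI:
  assumes "insert x S \<in> E" "insert y S \<in> E" "x \<notin> S" "y \<notin> S" "x \<noteq> y"
    and "finite S" "card S = k - 1"
  shows "diamond k E x y (insert x S) (insert y S)"
proof -
  have "insert x S \<inter> insert y S = S" using assms(3-5) by auto
  then show ?thesis unfolding diamond_def using assms by auto
qed

lemma count_ge_of_potential_le:
  fixes h j :: nat
  assumes pot: "(1/2) ^ h \<le> real n ^ k * (1 - \<gamma>/2) ^ j"
    and \<gamma>: "0 \<le> \<gamma>" "\<gamma> \<le> 2" and n: "0 < n"
    and rate: "real k * ln (real n) + \<rho> * real n \<le> \<gamma>/2 * real j"
  shows "\<rho> * real n \<le> real h"
proof -
  have "exp (- real h) = exp (- 1) ^ h" by (simp add: exp_of_nat_mult[symmetric])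
  also have "\<dots> \<le> (1/2) ^ h"
    using exp_ge_add_one_self[of 1] by (intro power_mono) (auto simp: exp_minus field_simps)
  also have "\<dots> \<le> exp (real k * ln (real n)) * (1 - \<gamma>/2) ^ j"
    using pot n by (simp add: exp_of_nat_mult[symmetric] ln_realpow[symmetric])
  also have "\<dots> \<le> exp (real k * ln (real n)) * exp (- \<gamma>/2) ^ j"
    using \<gamma> exp_ge_add_one_self[of "- \<gamma>/2"] by (intro mult_left_mono power_mono) auto
  also have "\<dots> = exp (real k * ln (real n) - \<gamma>/2 * real j)"
    unfolding exp_of_nat_mult[symmetric] exp_add[symmetric] by (simp add: algebra_simps)
  also have "\<dots> \<le> exp (- (\<rho> * real n))" using rate by simp
  finally show ?thesis by simp
qed

text \<open>A lower bound for the fraction of candidates that absorb a fixed \<open>k\<close>-tuple; the cap at 1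
  keeps the factor \<open>1 - absorption_rate k \<epsilon> / 2\<close> of a greedy step nonnegative.\<close>
definition absorption_rate :: "nat \<Rightarrow> real \<Rightarrow> real" where
  "absorption_rate k \<epsilon> = min 1 (\<epsilon> ^ (k - 1) / 2 / (2 * real (k - 1)) ^ ((k - 1) * k))"

lemma absorption_rate_pos: "0 < \<epsilon> \<Longrightarrow> 2 \<le> k \<Longrightarrow> 0 < absorption_rate k \<epsilon>"
  unfolding absorption_rate_def by simp

lemma absorption_rate_le_1: "absorption_rate k \<epsilon> \<le> 1"
  unfolding absorption_rate_def by simp

section \<open>Links and common links in a dense \<open>k\<close>-graph\<close>

locale dense_kgraph =
  fixes k d :: nat and \<epsilon> :: real and n :: nat and E :: "nat set set"
  assumes one_le_d: "1 \<le> d" and d_less_k: "d < k" and eps_pos: "0 < \<epsilon>"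
    and kgraph: "kgraph k {..<n} E"
    and min_deg_ge: "(1/2 + \<epsilon>) * real ((n - d) choose (k - d)) \<le> real (min_deg {..<n} E d)"
    and k_less_n: "k < n"
begin

lemma two_le_k: "2 \<le> k"
  using one_le_d d_less_k by simp

lemma edge_subset: "e \<in> E \<Longrightarrow> e \<subseteq> {..<n}" and card_edge: "e \<in> E \<Longrightarrow> card e = k"
  using kgraph unfolding kgraph_def by auto

lemma finite_edges: "finite E"
  using edge_subset by (auto intro: finite_subset[of _ "Pow {..<n}"])

lemma vertex_degree_ge:
  assumes "w < n"
  shows "(1/2 + \<epsilon>) * real ((n - 1) choose (k - 1)) \<le> card {e \<in> E. w \<in> e}"
proof -
  let ?D = "{S. S \<subseteq> {..<n} \<and> card S = d \<and> w \<in> S}"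
  have card_D: "card ?D = (n - 1) choose (d - 1)"
    using card_supersets_of_card[of "{..<n}" "{w}" d] assms one_le_d by simp
  have "card ?D * min_deg {..<n} E d \<le> (\<Sum>S\<in>?D. card {e \<in> E. S \<subseteq> e})"
    using sum_mono[of ?D "\<lambda>_. min_deg {..<n} E d"] min_deg_le[of "{..<n}" _ d E] by simp
  also have "\<dots> = card {e \<in> E. w \<in> e} * ((k - 1) choose (d - 1))"
    using sum_codegrees_through_vertex[OF kgraph _ one_le_d] assms by simp
  finally have deg: "real ((n - 1) choose (d - 1)) * min_deg {..<n} E d
      \<le> card {e \<in> E. w \<in> e} * real ((k - 1) choose (d - 1))"
    using card_D by (metis of_nat_le_iff of_nat_mult)
  have "((n - 1) choose (k - 1)) * ((k - 1) choose (d - 1))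
      = ((n - 1) choose (d - 1)) * ((n - d) choose (k - d))"
    using choose_mult[of "d - 1" "k - 1" "n - 1"] one_le_d d_less_k k_less_n by simp
  then have binom: "real ((n - 1) choose (k - 1)) * real ((k - 1) choose (d - 1))
      = real ((n - 1) choose (d - 1)) * real ((n - d) choose (k - d))"
    by (metis of_nat_mult)
  have "(1/2 + \<epsilon>) * real ((n - 1) choose (k - 1)) * real ((k - 1) choose (d - 1))
      = real ((n - 1) choose (d - 1)) * ((1/2 + \<epsilon>) * real ((n - d) choose (k - d)))"
    using binom by (simp add: algebra_simps)
  also have "\<dots> \<le> real ((n - 1) choose (d - 1)) * min_deg {..<n} E d"
    using min_deg_ge by (intro mult_left_mono) auto
  also have "\<dots> \<le> card {e \<in> E. w \<in> e} * real ((k - 1) choose (d - 1))"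
    by (rule deg)
  finally show ?thesis
    using d_less_k by (simp add: mult_le_cancel_right)
qed

lemma codegree_le:
  assumes "w \<noteq> y"
  shows "card {e \<in> E. w \<in> e \<and> y \<in> e} \<le> (n - 1) ^ (k - 2)"
proof (cases "w < n \<and> y < n")
  case True
  have "card {e \<in> E. w \<in> e \<and> y \<in> e} \<le> card {S. S \<subseteq> {..<n} \<and> card S = k \<and> {w, y} \<subseteq> S}"
    using edge_subset card_edge by (intro card_mono) (auto intro: finite_subset[of _ "Pow {..<n}"])
  also have "\<dots> = (n - 2) choose (k - 2)"
    using card_supersets_of_card[of "{..<n}" "{w, y}" k] True assms two_le_k
    by (simp add: numeral_2_eq_2)
  also have "\<dots> \<le> (n - 1) ^ (k - 2)"
    using binomial_le_pow[of "k - 2" "n - 2"] k_less_n power_mono[of "n - 2" "n - 1" "k - 2"]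
    by fastforce
  finally show ?thesis .
next
  case False
  then have "{e \<in> E. w \<in> e \<and> y \<in> e} = {}" using edge_subset by auto
  then show ?thesis by (simp only: card.empty zero_le)
qed

definition link_avoiding :: "nat \<Rightarrow> nat set \<Rightarrow> nat set set" where
  "link_avoiding w Y = {S. S \<subseteq> {..<n} - insert w Y \<and> card S = k - 1 \<and> insert w S \<in> E}"

lemma finite_link_avoiding: "finite (link_avoiding w Y)"
  unfolding link_avoiding_def by (auto intro: finite_subset[of _ "Pow {..<n}"])

lemma card_link_avoiding_ge:
  assumes "w < n" "finite Y"
  shows "(1/2 + \<epsilon>) * real ((n - 1) choose (k - 1)) - card Y * real ((n - 1) ^ (k - 2))
    \<le> card (link_avoiding w Y)"
proof -
  let ?A = "{e \<in> E. w \<in> e}" and ?M = "{e \<in> E. w \<in> e \<and> e \<inter> (Y - {w}) \<noteq> {}}"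
  have "card ?M \<le> card (\<Union>y\<in>Y - {w}. {e \<in> E. w \<in> e \<and> y \<in> e})"
    using assms finite_edges by (intro card_mono) auto
  also have "\<dots> \<le> (\<Sum>y\<in>Y - {w}. card {e \<in> E. w \<in> e \<and> y \<in> e})"
    using assms by (intro card_UN_le) auto
  also have "\<dots> \<le> (\<Sum>y\<in>Y - {w}. (n - 1) ^ (k - 2))"
    by (intro sum_mono codegree_le) auto
  also have "\<dots> = card (Y - {w}) * (n - 1) ^ (k - 2)" by simp
  also have "\<dots> \<le> card Y * (n - 1) ^ (k - 2)"
    using assms by (intro mult_right_mono card_mono) auto
  finally have M: "card ?M \<le> card Y * (n - 1) ^ (k - 2)" .
  have "inj_on (\<lambda>e. e - {w}) (?A - ?M)"
    unfolding inj_on_def by (metis (mono_tags, lifting) DiffD1 insert_Diff mem_Collect_eq)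
  moreover have "(\<lambda>e. e - {w}) ` (?A - ?M) \<subseteq> link_avoiding w Y"
    using edge_subset card_edge finite_subset[OF edge_subset]
    by (auto simp: link_avoiding_def insert_absorb)
  ultimately have "card (?A - ?M) \<le> card (link_avoiding w Y)"
    using finite_link_avoiding by (intro card_inj_on_le)
  moreover have "card ?A \<le> card ((?A - ?M) \<union> ?M)"
    using finite_edges by (intro card_mono) auto
  moreover have "card ((?A - ?M) \<union> ?M) \<le> card (?A - ?M) + card ?M"
    by (rule card_Un_le)
  ultimately have "card ?A \<le> card (link_avoiding w Y) + card Y * (n - 1) ^ (k - 2)"
    using M by linarith
  then have "real (card ?A) \<le> card (link_avoiding w Y) + card Y * real ((n - 1) ^ (k - 2))"
    by (metis of_nat_add of_nat_le_iff of_nat_mult)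
  then show ?thesis
    using vertex_degree_ge[OF assms(1)] by linarith
qed

definition common_link :: "nat \<Rightarrow> nat \<Rightarrow> nat set set" where
  "common_link w v = link_avoiding w {v} \<inter> link_avoiding v {w}"

lemma common_link_iff:
  "S \<in> common_link w v \<longleftrightarrow>
     S \<subseteq> {..<n} - {w, v} \<and> card S = k - 1 \<and> insert w S \<in> E \<and> insert v S \<in> E"
  unfolding common_link_def link_avoiding_def by auto

lemma card_common_link_ge:
  assumes "w < n" "v < n" "w \<noteq> v"
  shows "2 * \<epsilon> * real ((n - 1) choose (k - 1)) - 2 * real ((n - 1) ^ (k - 2))
    \<le> card (common_link w v)"
proof -
  have "link_avoiding w {v} \<union> link_avoiding v {w} \<subseteq> {S. S \<subseteq> {..<n} - {w} \<and> card S = k - 1}"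
    unfolding link_avoiding_def by auto
  from card_mono[OF _ this]
  have "card (link_avoiding w {v} \<union> link_avoiding v {w}) \<le> (n - 1) choose (k - 1)"
    using n_subsets[of "{..<n} - {w}" "k - 1"] assms(1) by (simp add: finite_subset[of _ "Pow {..<n}"])
  then have "card (link_avoiding w {v}) + card (link_avoiding v {w})
      \<le> ((n - 1) choose (k - 1)) + card (common_link w v)"
    unfolding common_link_def
    using card_Un_Int[OF finite_link_avoiding finite_link_avoiding, of w "{v}" v "{w}"] by linarith
  then show ?thesis
    using card_link_avoiding_ge[OF assms(1), of "{v}"] card_link_avoiding_ge[OF assms(2), of "{w}"]
    by (simp add: algebra_simps)
qed

section \<open>Absorbing candidates\<close>

text \<open>Forbidding \<open>c\<close> vertices destroys at most \<open>c (n-1)^(k-2)\<close> of the \<open>(k-1)\<close>-sets of a link;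
  affordability means that this is at most an \<open>\<epsilon>\<close>-fraction of all of them.\<close>
definition affordable :: "nat \<Rightarrow> bool" where
  "affordable c \<longleftrightarrow> real c * real ((n - 1) ^ (k - 2)) \<le> \<epsilon> * real ((n - 1) choose (k - 1))"

lemma affordable_mono: "affordable c \<Longrightarrow> c' \<le> c \<Longrightarrow> affordable c'"
  unfolding affordable_def by (erule order_trans[rotated]) (intro mult_right_mono of_nat_mono, auto)

definition edge_completions :: "nat \<Rightarrow> nat set \<Rightarrow> nat list set" where
  "edge_completions w Y = {vs. distinct vs \<and> set vs \<in> link_avoiding w Y}"

lemma edge_completionsD:
  assumes "vs \<in> edge_completions w Y"
  shows "distinct vs" "length vs = k - 1" "set vs \<subseteq> {..<n}" "w \<notin> set vs"
    "set vs \<inter> Y = {}" "insert w (set vs) \<in> E"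
  using assms distinct_card[of vs] unfolding edge_completions_def link_avoiding_def by auto

lemma finite_edge_completions: "finite (edge_completions w Y)"
  using finite_lists_length_eq[of "{..<n}" "k - 1"]
  by (rule finite_subset[rotated]) (auto dest: edge_completionsD)

lemma card_link_avoiding_le_edge_completions:
  "card (link_avoiding w Y) \<le> card (edge_completions w Y)"
proof -
  have "link_avoiding w Y \<subseteq> set ` edge_completions w Y"
  proof
    fix S assume S: "S \<in> link_avoiding w Y"
    then have "finite S" unfolding link_avoiding_def by (auto intro: finite_subset)
    with S show "S \<in> set ` edge_completions w Y"
      unfolding edge_completions_def by (intro image_eqI[of _ _ "sorted_list_of_set S"]) auto
  qed
  then show ?thesis
    using card_mono[OF finite_imageI[OF finite_edge_completions]] card_image_le[OF finite_edge_completions]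
    by (meson order_trans)
qed

definition link_choices :: "nat set \<Rightarrow> nat list \<Rightarrow> nat list \<Rightarrow> nat set list \<Rightarrow> nat set set" where
  "link_choices U ws vs pre = {S \<in> common_link (ws ! length pre) (vs ! length pre).
      S \<inter> (U \<union> set ws \<union> set vs \<union> \<Union>(set pre)) = {}}"

definition link_sequences :: "nat set \<Rightarrow> nat list \<Rightarrow> nat list \<Rightarrow> nat set list set" where
  "link_sequences U ws vs =
     {Ss. length Ss = k - 1 \<and> (\<forall>i<k - 1. Ss ! i \<in> link_choices U ws vs (take i Ss))}"

lemma link_choices_prefixD:
  assumes "\<forall>i<length pre. pre ! i \<in> link_choices U ws vs (take i pre)" "S \<in> set pre"
  shows "S \<subseteq> {..<n}" "card S = k - 1"
  using assms unfolding link_choices_def common_link_iff by (auto simp: in_set_conv_nth)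

lemma card_union_prefix_le:
  assumes "length pre < k - 1" "\<forall>i<length pre. pre ! i \<in> link_choices U ws vs (take i pre)"
  shows "card (\<Union>(set pre)) \<le> (k - 1) * (k - 1)"
proof -
  have "sum card (set pre) = card (set pre) * (k - 1)"
    using link_choices_prefixD(2)[OF assms(2)] by simp
  also have "\<dots> \<le> (k - 1) * (k - 1)"
    using card_length[of pre] assms(1) by (intro mult_right_mono) auto
  finally show ?thesis using card_Union_le_sum_card[of "set pre"] by linarith
qed

text \<open>The extra 2 pays for the two codegrees lost in a common link, see \<open>card_common_link_ge\<close>.\<close>
lemma card_forbidden_le:
  assumes "length ws = k - 1" "length vs = k - 1" "length pre < k - 1"
    and "\<forall>i<length pre. pre ! i \<in> link_choices U ws vs (take i pre)"
  shows "card (U \<union> set ws \<union> set vs \<union> \<Union>(set pre)) + 2 \<le> card U + k^2 + 1"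
proof -
  have "card (U \<union> set ws \<union> set vs \<union> \<Union>(set pre))
      \<le> card U + card (set ws) + card (set vs) + card (\<Union>(set pre))"
    using card_Un_le[of U "set ws"] card_Un_le[of "U \<union> set ws" "set vs"]
      card_Un_le[of "U \<union> set ws \<union> set vs" "\<Union>(set pre)"] by linarith
  moreover have "k^2 = (k - 1) * (k - 1) + 2 * (k - 1) + 1"
    using two_le_k by (cases k) (auto simp: power2_eq_square)
  ultimately show ?thesis
    using assms(1,2) card_length[of ws] card_length[of vs] card_union_prefix_le[OF assms(3,4)]
    by linarith
qed

lemma card_link_choices_ge:
  assumes ws: "ordered_tuple k {..<n} w ws" and vs: "vs \<in> edge_completions w (U \<union> set ws)"
    and "finite U" and pre: "length pre < k - 1"
    and valid: "\<forall>i<length pre. pre ! i \<in> link_choices U ws vs (take i pre)"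
    and budget: "affordable (card U + k^2 + 1)"
  shows "\<epsilon> * real ((n - 1) choose (k - 1)) \<le> card (link_choices U ws vs pre)"
proof -
  let ?i = "length pre" and ?Y = "U \<union> set ws \<union> set vs \<union> \<Union>(set pre)"
  have ws': "length ws = k - 1" "set ws \<subseteq> {..<n}" using ws unfolding ordered_tuple_def by auto
  note vs' = edge_completionsD[OF vs]
  have card_Y: "card ?Y + 2 \<le> card U + k^2 + 1"
    by (rule card_forbidden_le[OF ws'(1) vs'(2) pre valid])
  have fin_Y: "finite ?Y"
    using assms(3) link_choices_prefixD(1)[OF valid] by (auto intro: finite_subset[of _ "{..<n}"])
  let ?H = "{S. S \<subseteq> {..<n} \<and> card S = k - 1 \<and> S \<inter> ?Y \<noteq> {}}"
  from card_subsets_meeting_le[OF _ fin_Y, of "{..<n}" "k - 1"]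
  have "card ?H \<le> card ?Y * ((n - 1) choose (k - 2))"
    using two_le_k by (simp add: diff_diff_add numeral_2_eq_2)
  also have "\<dots> \<le> card ?Y * (n - 1) ^ (k - 2)"
    using k_less_n by (intro mult_left_mono binomial_le_pow) auto
  finally have meeting: "card ?H \<le> card ?Y * (n - 1) ^ (k - 2)" .
  have "ws ! ?i \<in> set ws" "vs ! ?i \<in> set vs" using pre ws'(1) vs'(2) by simp_all
  then have "ws ! ?i < n" "vs ! ?i < n" "ws ! ?i \<noteq> vs ! ?i" using ws'(2) vs'(3,5) by auto
  then have common: "2 * \<epsilon> * real ((n - 1) choose (k - 1)) - 2 * real ((n - 1) ^ (k - 2))
      \<le> card (common_link (ws ! ?i) (vs ! ?i))"
    by (rule card_common_link_ge)
  have "link_choices U ws vs pre = common_link (ws ! ?i) (vs ! ?i) - ?H"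
    by (auto simp: link_choices_def common_link_iff)
  moreover have "finite ?H" by (auto intro: finite_subset[of _ "Pow {..<n}"])
  ultimately have "card (common_link (ws ! ?i) (vs ! ?i)) - card ?H \<le> card (link_choices U ws vs pre)"
    by (simp add: diff_card_le_card_Diff)
  then have "real (card (common_link (ws ! ?i) (vs ! ?i))) - card ?H \<le> card (link_choices U ws vs pre)"
    by linarith
  moreover have "real (card ?H) \<le> card ?Y * real ((n - 1) ^ (k - 2))"
    using meeting unfolding of_nat_mult[symmetric] of_nat_le_iff .
  moreover have "real (card ?Y + 2) * real ((n - 1) ^ (k - 2))
      \<le> real (card U + k^2 + 1) * real ((n - 1) ^ (k - 2))"
    using card_Y by (intro mult_right_mono) (simp only: of_nat_le_iff, simp)
  then have "card ?Y * real ((n - 1) ^ (k - 2)) + 2 * real ((n - 1) ^ (k - 2))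
      \<le> real (card U + k^2 + 1) * real ((n - 1) ^ (k - 2))"
    by (simp add: distrib_right)
  ultimately show ?thesis using common budget unfolding affordable_def by linarith
qed

lemma card_link_sequences_ge:
  assumes "ordered_tuple k {..<n} w ws" "vs \<in> edge_completions w (U \<union> set ws)" "finite U"
    and "affordable (card U + k^2 + 1)"
  shows "(\<epsilon> * real ((n - 1) choose (k - 1))) ^ (k - 1) \<le> card (link_sequences U ws vs)"
  unfolding link_sequences_def
proof (rule card_choice_sequences_ge[of "Pow {..<n}"])
  show "link_choices U ws vs pre \<subseteq> Pow {..<n}" for pre
    by (auto simp: link_choices_def common_link_iff)
qed (use assms eps_pos card_link_choices_ge in auto)

lemma link_sequencesD:
  assumes "Ss \<in> link_sequences U ws vs" "i < k - 1"
  shows "Ss ! i \<in> common_link (ws ! i) (vs ! i)" "Ss ! i \<inter> (U \<union> set ws \<union> set vs) = {}"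
    "\<And>j. j < i \<Longrightarrow> Ss ! i \<inter> Ss ! j = {}"
proof -
  have "length Ss = k - 1" "Ss ! i \<in> link_choices U ws vs (take i Ss)"
    using assms unfolding link_sequences_def by auto
  moreover have "Ss ! j \<in> set (take i Ss)" if "j < i" for j
    using that assms(2) \<open>length Ss = k - 1\<close> by (auto simp: in_set_conv_nth intro!: exI[of _ j])
  ultimately show "Ss ! i \<in> common_link (ws ! i) (vs ! i)" "Ss ! i \<inter> (U \<union> set ws \<union> set vs) = {}"
    "\<And>j. j < i \<Longrightarrow> Ss ! i \<inter> Ss ! j = {}"
    using assms(2) unfolding link_choices_def by (auto simp: min_def)
qed

lemma finite_link_sequences: "finite (link_sequences U ws vs)"
proof (rule finite_subset)
  show "link_sequences U ws vs \<subseteq> {Ss. set Ss \<subseteq> Pow {..<n} \<and> length Ss = k - 1}"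
    using link_sequencesD(1) by (fastforce simp: link_sequences_def in_set_conv_nth common_link_iff)
qed (simp add: finite_lists_length_eq)

text \<open>The candidate \<open>(vs, Ss)\<close> encodes the tuple whose \<open>i\<close>-th edge is \<open>vs!i + Ss!i\<close>: for
  \<open>Ss!i\<close> in the common link of \<open>ws!i\<close> and \<open>vs!i\<close>, this is the half containing \<open>vs!i\<close> of the
  diamond \<open>{ws!i + Ss!i, vs!i + Ss!i}\<close>, while \<open>w + vs\<close> is the edge required of an absorbing tuple.\<close>
definition half_diamond_tuple :: "nat list \<Rightarrow> nat set list \<Rightarrow> nat set list" where
  "half_diamond_tuple vs Ss = map (\<lambda>i. insert (vs ! i) (Ss ! i)) [0..<k - 1]"

lemma length_half_diamond_tuple [simp]: "length (half_diamond_tuple vs Ss) = k - 1"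
  and nth_half_diamond_tuple [simp]: "i < k - 1 \<Longrightarrow> half_diamond_tuple vs Ss ! i = insert (vs ! i) (Ss ! i)"
  unfolding half_diamond_tuple_def by simp_all

lemma half_diamond_tuple_disjoint:
  assumes vs: "vs \<in> edge_completions w Y" and Ss: "Ss \<in> link_sequences U ws vs"
    and "i < k - 1" "j < k - 1" "i \<noteq> j"
  shows "half_diamond_tuple vs Ss ! i \<inter> half_diamond_tuple vs Ss ! j = {}"
proof -
  note vs' = edge_completionsD[OF vs]
  have "insert (vs ! i) (Ss ! i) \<inter> insert (vs ! j) (Ss ! j) = {}" if "j < i" "i < k - 1" for i j
  proof -
    have "vs ! i \<noteq> vs ! j" using that vs'(1,2) by (simp add: nth_eq_iff_index_eq)
    moreover have "vs ! i \<in> set vs" "vs ! j \<in> set vs" using that vs'(2) by simp_all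
    then have "vs ! i \<notin> Ss ! j" "vs ! j \<notin> Ss ! i"
      using link_sequencesD(2)[OF Ss, of i] link_sequencesD(2)[OF Ss, of j] that by auto
    ultimately show ?thesis using link_sequencesD(3)[OF Ss that(2,1)] by auto
  qed
  moreover have "j < i \<or> i < j" using assms(5) by arith
  ultimately show ?thesis using assms(3,4) by (metis Int_commute nth_half_diamond_tuple)
qed

lemma absorbing_half_diamond_tuple:
  assumes ws: "ordered_tuple k {..<n} w ws" and vs: "vs \<in> edge_completions w (U \<union> set ws)"
    and Ss: "Ss \<in> link_sequences U ws vs"
  shows "absorbing k E w ws (half_diamond_tuple vs Ss)"
    and "\<Union>(set (half_diamond_tuple vs Ss)) \<inter> U = {}"
proof -
  let ?T = "half_diamond_tuple vs Ss"
  note vs' = edge_completionsD[OF vs]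
  have lws: "length ws = k - 1" using ws unfolding ordered_tuple_def by simp
  have vs_i: "vs ! i \<in> set vs" "vs ! i \<notin> U" "ws ! i \<noteq> vs ! i" if "i < k - 1" for i
  proof -
    show "vs ! i \<in> set vs" using that vs'(2) by simp
    moreover have "ws ! i \<in> set ws" using that lws by simp
    ultimately show "vs ! i \<notin> U" "ws ! i \<noteq> vs ! i" using vs'(5) by auto
  qed
  have link_i: "Ss ! i \<subseteq> {..<n} - {ws ! i, vs ! i}" "card (Ss ! i) = k - 1"
      "insert (ws ! i) (Ss ! i) \<in> E" "insert (vs ! i) (Ss ! i) \<in> E" if "i < k - 1" for i
    using link_sequencesD(1)[OF Ss that] unfolding common_link_iff by auto
  have diamond: "diamond k E (ws ! i) (vs ! i) (insert (ws ! i) (Ss ! i)) (?T ! i)" if "i < k - 1" for i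
    using link_i[OF that] vs_i[OF that] that
    by (auto intro!: diamond_insertI intro: finite_subset[of _ "{..<n}"])
  show "absorbing k E w ws ?T"
    unfolding absorbing_def
  proof (intro conjI exI[of _ vs] allI impI)
    show "set ?T \<subseteq> E" using link_i(4) by (auto simp: in_set_conv_nth)
    show "\<exists>e. diamond k E (ws ! i) (vs ! i) e (?T ! i)" if "i < k - 1" for i
      using diamond[OF that] by blast
    show "?T ! i \<inter> ?T ! j = {}" if "i < k - 1" "j < k - 1" "i \<noteq> j" for i j
      using half_diamond_tuple_disjoint[OF vs Ss that] .
  qed (use vs' in auto)
  show "\<Union>(set ?T) \<inter> U = {}"
    using vs_i(2) link_sequencesD(2)[OF Ss] by (fastforce simp: in_set_conv_nth)
qed

definition candidates :: "(nat list \<times> nat set list) set" where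
  "candidates = {vs. set vs \<subseteq> {..<n} \<and> length vs = k - 1} \<times>
     {Ss. set Ss \<subseteq> {S. S \<subseteq> {..<n} \<and> card S = k - 1} \<and> length Ss = k - 1}"

definition fresh_candidates :: "nat set \<Rightarrow> (nat list \<times> nat set list) set" where
  "fresh_candidates U = {(vs, Ss) \<in> candidates.
     absorbing_tuple_of k {..<n} E (half_diamond_tuple vs Ss) \<and> \<Union>(set (half_diamond_tuple vs Ss)) \<inter> U = {}}"

definition absorbing_candidates :: "nat set \<Rightarrow> nat \<Rightarrow> nat list \<Rightarrow> (nat list \<times> nat set list) set" where
  "absorbing_candidates U w ws =
     {(vs, Ss) \<in> fresh_candidates U. half_diamond_tuple vs Ss \<in> absorbing_set k E w ws}"

lemma finite_candidates: "finite candidates"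
  unfolding candidates_def
  by (intro finite_cartesian_product finite_lists_length_eq) (auto intro: finite_subset[of _ "Pow {..<n}"])

lemma absorbing_candidates_subset: "absorbing_candidates U w ws \<subseteq> fresh_candidates U"
  and fresh_candidates_subset: "fresh_candidates U \<subseteq> candidates"
  unfolding absorbing_candidates_def fresh_candidates_def by auto

lemma finite_absorbing_candidates: "finite (absorbing_candidates U w ws)"
  using absorbing_candidates_subset fresh_candidates_subset finite_candidates
  by (rule finite_subset[OF order_trans])

lemma card_candidates_le: "card candidates \<le> n ^ ((k - 1) * k)"
proof -
  have "finite {S. S \<subseteq> {..<n} \<and> card S = k - 1}" by (auto intro: finite_subset[of _ "Pow {..<n}"])
  then have "card candidates = n ^ (k - 1) * (n choose (k - 1)) ^ (k - 1)"
    unfolding candidates_def card_cartesian_product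
    using card_lists_length_eq[of "{..<n}" "k - 1"] n_subsets[of "{..<n}" "k - 1"]
    by (simp add: card_lists_length_eq)
  also have "\<dots> \<le> n ^ (k - 1) * (n ^ (k - 1)) ^ (k - 1)"
    using k_less_n by (intro mult_left_mono power_mono binomial_le_pow) auto
  also have "\<dots> = n ^ ((k - 1) * k)"
    using two_le_k by (cases k) (auto simp: power_add power_mult[symmetric] algebra_simps)
  finally show ?thesis .
qed

lemma completion_absorbing_candidate:
  assumes "ordered_tuple k {..<n} w ws" "vs \<in> edge_completions w (U \<union> set ws)"
    and "Ss \<in> link_sequences U ws vs"
  shows "(vs, Ss) \<in> absorbing_candidates U w ws"
proof -
  have len: "length Ss = k - 1" using assms(3) by (simp add: link_sequences_def)
  have "S \<subseteq> {..<n} \<and> card S = k - 1" if S: "S \<in> set Ss" for S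
  proof -
    obtain i where "i < k - 1" "S = Ss ! i" using S len by (auto simp: in_set_conv_nth)
    then show ?thesis using link_sequencesD(1)[OF assms(3)] by (auto simp: common_link_iff)
  qed
  then have "(vs, Ss) \<in> candidates"
    using edge_completionsD[OF assms(2)] len unfolding candidates_def by blast
  then show ?thesis
    using absorbing_half_diamond_tuple[OF assms] assms(1)
    unfolding absorbing_candidates_def fresh_candidates_def absorbing_set_def absorbing_tuple_of_def
    by blast
qed

lemma card_absorbing_candidates_ge:
  assumes ws: "ordered_tuple k {..<n} w ws" and "finite U"
    and budget: "affordable (card U + k^2 + 1)"
  shows "\<epsilon> ^ (k - 1) / 2 * real ((n - 1) choose (k - 1)) ^ k \<le> card (absorbing_candidates U w ws)"
proof -
  let ?D = "real ((n - 1) choose (k - 1))" and ?C = "edge_completions w (U \<union> set ws)"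
  have "k \<le> k^2" by (cases k) (auto simp: power2_eq_square)
  then have "card (U \<union> set ws) \<le> card U + k^2 + 1"
    using card_Un_le[of U "set ws"] card_length[of ws] ws unfolding ordered_tuple_def by linarith
  with budget have "affordable (card (U \<union> set ws))" by (rule affordable_mono)
  moreover have "(1/2 + \<epsilon>) * ?D = ?D / 2 + \<epsilon> * ?D" by (simp add: algebra_simps)
  moreover have "w < n" using ws unfolding ordered_tuple_def by simp
  ultimately have "?D / 2 \<le> card (link_avoiding w (U \<union> set ws))"
    using card_link_avoiding_ge[of w "U \<union> set ws"] assms(2) unfolding affordable_def by auto
  also have "\<dots> \<le> card ?C" by (simp add: card_link_avoiding_le_edge_completions)
  finally have "?D / 2 * (\<epsilon> * ?D) ^ (k - 1) \<le> card ?C * (\<epsilon> * ?D) ^ (k - 1)"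
    using eps_pos by (intro mult_right_mono) auto
  also have "\<dots> = (\<Sum>vs\<in>?C. (\<epsilon> * ?D) ^ (k - 1))" by simp
  also have "\<dots> \<le> (\<Sum>vs\<in>?C. real (card (link_sequences U ws vs)))"
    using card_link_sequences_ge[OF ws _ assms(2) budget] by (intro sum_mono)
  also have "\<dots> = card (Sigma ?C (link_sequences U ws))"
    using finite_edge_completions finite_link_sequences by (simp add: card_SigmaI)
  also have "\<dots> \<le> card (absorbing_candidates U w ws)"
    using completion_absorbing_candidate[OF ws] finite_absorbing_candidates
    by (intro of_nat_mono card_mono) auto
  also have "?D / 2 * (\<epsilon> * ?D) ^ (k - 1) = \<epsilon> ^ (k - 1) / 2 * ?D ^ Suc (k - 1)"
    by (simp add: power_mult_distrib)
  finally show ?thesis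
    using two_le_k by (simp add: Suc_diff_1)
qed

lemma card_absorbing_candidates_ge_rate:
  assumes "ordered_tuple k {..<n} w ws" "finite U"
    and "affordable (card U + k^2 + 1)"
  shows "absorption_rate k \<epsilon> * real n ^ ((k - 1) * k) \<le> card (absorbing_candidates U w ws)"
proof -
  let ?x = "real n / (2 * real (k - 1))"
  have "?x ^ (k - 1) \<le> real ((n - 1) choose (k - 1))"
    using two_le_k k_less_n by (intro scaled_pow_le_binomial) auto
  then have "\<epsilon> ^ (k - 1) / 2 * (?x ^ (k - 1)) ^ k \<le> \<epsilon> ^ (k - 1) / 2 * real ((n - 1) choose (k - 1)) ^ k"
    using eps_pos by (intro mult_left_mono power_mono) auto
  also have "\<dots> \<le> card (absorbing_candidates U w ws)"
    using card_absorbing_candidates_ge[OF assms] .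
  also have "\<epsilon> ^ (k - 1) / 2 * (?x ^ (k - 1)) ^ k
      = \<epsilon> ^ (k - 1) / 2 / (2 * real (k - 1)) ^ ((k - 1) * k) * real n ^ ((k - 1) * k)"
    by (subst power_mult[symmetric], subst power_divide) (simp add: field_simps)
  also have "absorption_rate k \<epsilon> * real n ^ ((k - 1) * k) \<le> \<dots>"
    unfolding absorption_rate_def by (intro mult_right_mono) auto
  finally show ?thesis .
qed

lemma affordable_of_linear_bound:
  assumes "real c * real (k - 1) ^ (k - 1) \<le> \<epsilon> * real (n - 1)"
  shows "affordable c"
proof -
  have "real c * real ((n - 1) ^ (k - 2)) * real (n - 1) = real c * real (n - 1) ^ (k - 1)"
  proof -
    have "k - 1 = Suc (k - 2)" using two_le_k by simp
    then show ?thesis by (simp add: mult.commute mult.left_commute)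
  qed
  also have "\<dots> \<le> real c * (real (k - 1) ^ (k - 1) * real ((n - 1) choose (k - 1)))"
    using k_less_n by (intro mult_left_mono pow_le_pow_mult_binomial) auto
  also have "\<dots> \<le> \<epsilon> * real (n - 1) * real ((n - 1) choose (k - 1))"
    using assms by (simp add: mult.assoc[symmetric] mult_right_mono)
  finally have "real (n - 1) * (real c * real ((n - 1) ^ (k - 2)))
      \<le> real (n - 1) * (\<epsilon> * real ((n - 1) choose (k - 1)))"
    by (simp only: ac_simps)
  then show ?thesis
    unfolding affordable_def by (rule mult_left_le_imp_le) (use k_less_n two_le_k in simp)
qed

lemma absorbing_tuple_vertices:
  assumes "absorbing_tuple_of k {..<n} E T"
  shows "\<Union>(set T) \<subseteq> {..<n}" "card (\<Union>(set T)) \<le> (k - 1) * k"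
proof -
  have T: "length T = k - 1" "set T \<subseteq> E"
    using assms unfolding absorbing_tuple_of_def absorbing_def by auto
  then show "\<Union>(set T) \<subseteq> {..<n}" using edge_subset by blast
  have "card (\<Union>(set T)) \<le> (\<Sum>e\<in>set T. card e)" by (rule card_Union_le_sum_card)
  also have "\<dots> = card (set T) * k" using T card_edge by (simp add: subset_iff)
  also have "\<dots> \<le> (k - 1) * k" using card_length[of T] T by simp
  finally show "card (\<Union>(set T)) \<le> (k - 1) * k" .
qed

section \<open>Greedy selection\<close>

definition targets :: "(nat \<times> nat list) set" where
  "targets = {(w, ws). ordered_tuple k {..<n} w ws}"

definition absorption_count :: "nat set list set \<Rightarrow> nat \<times> nat list \<Rightarrow> nat" where
  "absorption_count \<A> = (\<lambda>(w, ws). card (absorbing_set k E w ws \<inter> \<A>))"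

definition potential :: "nat set list set \<Rightarrow> real" where
  "potential \<A> = (\<Sum>x\<in>targets. (1/2) ^ absorption_count \<A> x)"

lemma finite_targets: "finite targets" and card_targets_le: "card targets \<le> n ^ k"
proof -
  have sub: "targets \<subseteq> {..<n} \<times> {ws. set ws \<subseteq> {..<n} \<and> length ws = k - 1}"
    unfolding targets_def ordered_tuple_def by auto
  have fin: "finite ({..<n} \<times> {ws. set ws \<subseteq> {..<n} \<and> length ws = k - 1})"
    by (intro finite_cartesian_product finite_lists_length_eq) auto
  show "finite targets" using finite_subset[OF sub fin] .
  have "card targets \<le> n * n ^ (k - 1)"
    using card_mono[OF fin sub] by (simp add: card_cartesian_product card_lists_length_eq)
  also have "n * n ^ (k - 1) = n ^ k" using two_le_k by (cases k) auto
  finally show "card targets \<le> n ^ k" .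
qed

lemma absorbing_candidates_dense:
  assumes "finite U" "affordable (card U + k^2 + 1)" "ordered_tuple k {..<n} w ws"
  shows "absorption_rate k \<epsilon> * card (fresh_candidates U) \<le> card (absorbing_candidates U w ws)"
proof -
  have "card (fresh_candidates U) \<le> n ^ ((k - 1) * k)"
    using card_mono[OF finite_candidates fresh_candidates_subset[of U]] card_candidates_le by linarith
  then have "absorption_rate k \<epsilon> * card (fresh_candidates U) \<le> absorption_rate k \<epsilon> * real n ^ ((k - 1) * k)"
    using absorption_rate_pos[OF eps_pos two_le_k]
    by (intro mult_left_mono) (simp_all only: of_nat_power[symmetric] of_nat_le_iff less_imp_le)
  then show ?thesis
    using card_absorbing_candidates_ge_rate[OF assms(3,1,2)] by linarith
qed

lemma fresh_candidates_nonempty: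
  assumes "finite U" "affordable (card U + k^2 + 1)"
  shows "fresh_candidates U \<noteq> {}"
proof -
  have "ordered_tuple k {..<n} 0 [1..<k]"
    unfolding ordered_tuple_def using k_less_n by auto
  then have "absorption_rate k \<epsilon> * real n ^ ((k - 1) * k) \<le> card (absorbing_candidates U 0 [1..<k])"
    using card_absorbing_candidates_ge_rate assms by blast
  moreover have "0 < absorption_rate k \<epsilon> * real n ^ ((k - 1) * k)"
    using absorption_rate_pos[OF eps_pos two_le_k] k_less_n by simp
  ultimately have "absorbing_candidates U 0 [1..<k] \<noteq> {}" by auto
  then show ?thesis using absorbing_candidates_subset by blast
qed

lemma absorption_count_insert:
  assumes "finite \<A>" "T \<notin> \<A>"
  shows "absorption_count (insert T \<A>) (w, ws)
    = absorption_count \<A> (w, ws) + (if T \<in> absorbing_set k E w ws then 1 else 0)"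
  using assms by (simp add: absorption_count_def Int_insert_right)

lemma exists_fresh_absorbing_tuple:
  assumes "finite \<A>" "\<forall>T\<in>\<A>. \<Union>(set T) \<subseteq> U" "finite U"
    and budget: "affordable (card U + k^2 + 1)"
  shows "\<exists>T. T \<notin> \<A> \<and> absorbing_tuple_of k {..<n} E T \<and> \<Union>(set T) \<inter> U = {} \<and>
           potential (insert T \<A>) \<le> (1 - absorption_rate k \<epsilon> / 2) * potential \<A>"
proof -
  let ?\<gamma> = "absorption_rate k \<epsilon>" and ?C = "fresh_candidates U"
  let ?good = "\<lambda>(w, ws). absorbing_candidates U w ws"
  have "finite ?C" using fresh_candidates_subset finite_candidates by (rule finite_subset)
  moreover have "?C \<noteq> {}" using fresh_candidates_nonempty[OF assms(3) budget] .
  moreover have "?good x \<subseteq> ?C" "?\<gamma> * card ?C \<le> card (?good x)" if "x \<in> targets" for x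
    using that absorbing_candidates_subset absorbing_candidates_dense[OF assms(3) budget]
    by (auto simp: targets_def)
  ultimately obtain c where c: "c \<in> ?C" and decrease:
    "(\<Sum>x\<in>targets. (1/2) ^ (absorption_count \<A> x + (if c \<in> ?good x then 1 else 0)))
       \<le> (1 - ?\<gamma>/2) * potential \<A>"
    using exists_potential_decrease[where good = ?good and h = "absorption_count \<A>"]
    unfolding potential_def by blast
  obtain vs Ss where c_eq: "c = (vs, Ss)" by fastforce
  define T where "T = half_diamond_tuple vs Ss"
  have T: "absorbing_tuple_of k {..<n} E T" "\<Union>(set T) \<inter> U = {}"
    using c unfolding fresh_candidates_def T_def c_eq by auto
  have "T ! 0 \<in> set T" "T ! 0 \<noteq> {}"
    using two_le_k nth_mem[of 0 T] by (simp_all add: T_def)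
  then have "T \<notin> \<A>" using T(2) assms(2) by blast
  have "c \<in> ?good (w, ws) \<longleftrightarrow> T \<in> absorbing_set k E w ws" for w ws
    using c by (simp add: absorbing_candidates_def c_eq T_def)
  then have "absorption_count (insert T \<A>) x = absorption_count \<A> x + (if c \<in> ?good x then 1 else 0)"
    for x
    using absorption_count_insert[OF assms(1) \<open>T \<notin> \<A>\<close>] by (cases x) simp
  then have "potential (insert T \<A>) \<le> (1 - ?\<gamma>/2) * potential \<A>"
    using decrease unfolding potential_def by simp
  then show ?thesis using T \<open>T \<notin> \<A>\<close> by blast
qed

lemma greedy_absorbing_family:
  assumes budget: "affordable (j * ((k - 1) * k) + k^2 + 1)"
  shows "\<exists>\<A>. finite \<A> \<and> card \<A> = j \<and> (\<forall>T\<in>\<A>. absorbing_tuple_of k {..<n} E T) \<and>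
      tuples_vertex_disjoint \<A> \<and> potential \<A> \<le> card targets * (1 - absorption_rate k \<epsilon> / 2) ^ j"
proof -
  let ?q = "1 - absorption_rate k \<epsilon> / 2" and ?V = "\<lambda>\<A>. \<Union>T\<in>\<A>. \<Union>(set T)"
  have "\<exists>\<A>. finite \<A> \<and> card \<A> = i \<and> (\<forall>T\<in>\<A>. absorbing_tuple_of k {..<n} E T) \<and>
      tuples_vertex_disjoint \<A> \<and> card (?V \<A>) \<le> i * ((k - 1) * k) \<and>
      potential \<A> \<le> card targets * ?q ^ i" if "i \<le> j" for i
    using that
  proof (induction i)
    case 0
    have "potential {} = card targets" by (simp add: potential_def absorption_count_def split_def)
    then show ?case by (intro exI[of _ "{}"]) (simp add: tuples_vertex_disjoint_def)
  next
    case (Suc i)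
    then obtain \<A> where \<A>: "finite \<A>" "card \<A> = i" "\<forall>T\<in>\<A>. absorbing_tuple_of k {..<n} E T"
      "tuples_vertex_disjoint \<A>" "card (?V \<A>) \<le> i * ((k - 1) * k)" "potential \<A> \<le> card targets * ?q ^ i"
      by auto
    have "?V \<A> \<subseteq> {..<n}" using \<A>(3) absorbing_tuple_vertices(1) by blast
    then have fin_V: "finite (?V \<A>)" by (rule finite_subset) simp
    have "card (?V \<A>) \<le> j * ((k - 1) * k)"
      using \<A>(5) Suc.prems by (meson Suc_leD le_trans mult_le_mono1)
    then have "affordable (card (?V \<A>) + k^2 + 1)" using budget by (auto elim: affordable_mono)
    then obtain T where T: "T \<notin> \<A>" "absorbing_tuple_of k {..<n} E T" "\<Union>(set T) \<inter> ?V \<A> = {}"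
        "potential (insert T \<A>) \<le> ?q * potential \<A>"
      using exists_fresh_absorbing_tuple[OF \<A>(1) _ fin_V] by fastforce
    have "card (?V (insert T \<A>)) \<le> card (\<Union>(set T)) + card (?V \<A>)"
      by (simp add: card_Un_le)
    then have "card (?V (insert T \<A>)) \<le> Suc i * ((k - 1) * k)"
      using absorbing_tuple_vertices(2)[OF T(2)] \<A>(5) by simp
    moreover have "?q * potential \<A> \<le> ?q * (card targets * ?q ^ i)"
      using \<A>(6) absorption_rate_le_1[of k \<epsilon>] by (intro mult_left_mono) auto
    then have "potential (insert T \<A>) \<le> card targets * ?q ^ Suc i"
      using T(4) by (simp add: ac_simps)
    ultimately show ?case
      using \<A> T tuples_vertex_disjoint_insert[OF \<A>(4) T(3)] by (intro exI[of _ "insert T \<A>"]) auto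
  qed
  then show ?thesis by blast
qed

lemma absorbing_family_exists:
  assumes size: "real (j * ((k - 1) * k) + k^2 + 1) * real (k - 1) ^ (k - 1) \<le> \<epsilon> * real (n - 1)"
    and rate: "real k * ln (real n) + \<rho> * real n \<le> absorption_rate k \<epsilon> / 2 * real j"
  shows "\<exists>\<A>. finite \<A> \<and> card \<A> = j \<and> (\<forall>T\<in>\<A>. absorbing_tuple_of k {..<n} E T) \<and>
      tuples_vertex_disjoint \<A> \<and>
      (\<forall>w ws. ordered_tuple k {..<n} w ws \<longrightarrow> \<rho> * real n \<le> card (absorbing_set k E w ws \<inter> \<A>))"
proof -
  let ?q = "1 - absorption_rate k \<epsilon> / 2"
  obtain \<A> where \<A>: "finite \<A>" "card \<A> = j" "\<forall>T\<in>\<A>. absorbing_tuple_of k {..<n} E T"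
      "tuples_vertex_disjoint \<A>" and pot: "potential \<A> \<le> card targets * ?q ^ j"
    using greedy_absorbing_family[OF affordable_of_linear_bound[OF size]] by blast
  have "\<rho> * real n \<le> card (absorbing_set k E w ws \<inter> \<A>)" if "ordered_tuple k {..<n} w ws" for w ws
  proof (rule count_ge_of_potential_le)
    have "(w, ws) \<in> targets" using that by (simp add: targets_def)
    then have "(1/2) ^ absorption_count \<A> (w, ws) \<le> potential \<A>"
      unfolding potential_def by (intro member_le_sum finite_targets) auto
    also have "\<dots> \<le> card targets * ?q ^ j" by (rule pot)
    also have "\<dots> \<le> real n ^ k * ?q ^ j"
      using card_targets_le absorption_rate_le_1[of k \<epsilon>]
      by (intro mult_right_mono) (simp_all only: of_nat_power[symmetric] of_nat_le_iff, simp)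
    finally show "(1/2) ^ card (absorbing_set k E w ws \<inter> \<A>) \<le> real n ^ k * ?q ^ j"
      by (simp add: absorption_count_def)
  qed (use rate absorption_rate_pos[OF eps_pos two_le_k] absorption_rate_le_1[of k \<epsilon>] k_less_n in auto)
  then show ?thesis using \<A> by blast
qed

end

section \<open>Choice of the parameters\<close>

lemma nat_floor_bounds:
  fixes x :: real
  assumes "0 \<le> x"
  shows "x - 1 \<le> real (nat \<lfloor>x\<rfloor>)" "real (nat \<lfloor>x\<rfloor>) \<le> x"
  using assms real_of_int_floor_gt_diff_one[of x] by (simp_all add: of_nat_floor)

lemma eventually_absorption_parameters:
  fixes \<epsilon> \<beta> \<gamma> \<rho> :: real and k :: nat
  assumes "0 < \<epsilon>" "2 \<le> k" "0 < \<beta>" "\<beta> \<le> \<epsilon> / (4 * real k * real (k - 1) ^ k)"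
    and "0 < \<gamma>" "\<rho> \<le> \<beta> * \<gamma> / 8"
  shows "eventually (\<lambda>n. k < n \<and>
      real (nat \<lfloor>\<beta> * real n\<rfloor> * ((k - 1) * k) + k^2 + 1) * real (k - 1) ^ (k - 1) \<le> \<epsilon> * real (n - 1) \<and>
      real k * ln (real n) + \<rho> * real n \<le> \<gamma> / 2 * real (nat \<lfloor>\<beta> * real n\<rfloor>)) sequentially"
proof -
  let ?M = "real (k - 1) ^ (k - 1)"
  have "real (k - 1) * ?M = real (k - 1) ^ Suc (k - 1)" by simp
  also have "Suc (k - 1) = k" using assms(2) by simp
  finally have M: "real (k - 1) * ?M = real (k - 1) ^ k" .
  have "0 < real k * real (k - 1) ^ k" using assms(2) by simp
  then have \<beta>: "\<beta> * (real k * real (k - 1) ^ k) \<le> \<epsilon> / 4"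
    using assms(4) by (simp add: field_simps)
  have "eventually (\<lambda>n. k < n) sequentially" by (rule eventually_gt_at_top)
  moreover have "eventually (\<lambda>n. real (k^2 + 1) * ?M + \<epsilon> \<le> 3 * \<epsilon> / 4 * real n) sequentially"
    using assms(1) by real_asymp
  moreover have "eventually (\<lambda>n. real k * ln (real n) + \<gamma> / 2 \<le> 3 * \<beta> * \<gamma> / 8 * real n) sequentially"
    using assms(3,5) by real_asymp
  ultimately show ?thesis
  proof eventually_elim
    case (elim n)
    define j where "j = nat \<lfloor>\<beta> * real n\<rfloor>"
    have j: "\<beta> * real n - 1 \<le> real j" "real j \<le> \<beta> * real n"
      unfolding j_def using assms(3) by (simp_all add: nat_floor_bounds)
    have "real j * real ((k - 1) * k) * ?M = real j * (real k * real (k - 1) ^ k)"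
      using M by (simp add: ac_simps)
    also have "\<dots> \<le> \<beta> * real n * (real k * real (k - 1) ^ k)"
      using j(2) by (intro mult_right_mono) auto
    also have "\<dots> \<le> \<epsilon> / 4 * real n"
      using mult_right_mono[OF \<beta>, of "real n"] by (simp add: ac_simps)
    finally have "real (j * ((k - 1) * k) + k^2 + 1) * ?M \<le> \<epsilon> / 4 * real n + real (k^2 + 1) * ?M"
      by (simp add: distrib_right)
    also have "\<dots> \<le> \<epsilon> * real (n - 1)"
      using elim by (simp add: of_nat_diff algebra_simps)
    finally have size: "real (j * ((k - 1) * k) + k^2 + 1) * ?M \<le> \<epsilon> * real (n - 1)" .
    have "\<rho> * real n \<le> \<beta> * \<gamma> / 8 * real n" using assms(6) by (intro mult_right_mono) auto
    moreover have "\<gamma> / 2 * (\<beta> * real n - 1) \<le> \<gamma> / 2 * real j"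
      using j assms(5) by (intro mult_left_mono) auto
    moreover have "\<gamma> / 2 * (\<beta> * real n - 1) = 3 * \<beta> * \<gamma> / 8 * real n - \<gamma> / 2 + \<beta> * \<gamma> / 8 * real n"
      by (simp add: algebra_simps)
    ultimately have "real k * ln (real n) + \<rho> * real n \<le> \<gamma> / 2 * real j"
      using elim by linarith
    with elim size show ?case unfolding j_def by blast
  qed
qed

lemma absorbing_family_for_large_n:
  fixes k d :: nat and \<epsilon> \<beta> \<rho> :: real
  assumes "1 \<le> d" "d < k" "0 < \<epsilon>" "0 < \<beta>" "\<beta> \<le> \<epsilon> / (4 * real k * real (k - 1) ^ k)"
    and "\<rho> \<le> \<beta> * absorption_rate k \<epsilon> / 8"
  shows "\<exists>n0::nat. \<forall>n \<ge> n0. \<forall>E :: nat set set.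
           kgraph k {..<n} E \<longrightarrow>
           real (min_deg {..<n} E d) \<ge> (1/2 + \<epsilon>) * real ((n - d) choose (k - d)) \<longrightarrow>
           (\<exists>\<A>. finite \<A> \<and> (\<forall>T\<in>\<A>. absorbing_tuple_of k {..<n} E T) \<and>
               tuples_vertex_disjoint \<A> \<and>
               real (card \<A>) \<le> \<beta> * real n \<and>
               (\<forall>w ws. ordered_tuple k {..<n} w ws \<longrightarrow>
                  real (card (absorbing_set k E w ws \<inter> \<A>)) \<ge> \<rho> * real n))"
proof -
  have "2 \<le> k" using assms by simp
  then obtain n0 where n0: "\<And>n. n0 \<le> n \<Longrightarrow> k < n \<and>
      real (nat \<lfloor>\<beta> * real n\<rfloor> * ((k - 1) * k) + k^2 + 1) * real (k - 1) ^ (k - 1) \<le> \<epsilon> * real (n - 1) \<and>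
      real k * ln (real n) + \<rho> * real n \<le> absorption_rate k \<epsilon> / 2 * real (nat \<lfloor>\<beta> * real n\<rfloor>)"
    using eventually_absorption_parameters[OF assms(3) _ assms(4,5) absorption_rate_pos[OF assms(3)] assms(6)]
    unfolding eventually_sequentially by blast
  have "\<exists>\<A>. finite \<A> \<and> (\<forall>T\<in>\<A>. absorbing_tuple_of k {..<n} E T) \<and> tuples_vertex_disjoint \<A> \<and>
      real (card \<A>) \<le> \<beta> * real n \<and>
      (\<forall>w ws. ordered_tuple k {..<n} w ws \<longrightarrow> \<rho> * real n \<le> real (card (absorbing_set k E w ws \<inter> \<A>)))"
    if "n0 \<le> n" "kgraph k {..<n} E" "(1/2 + \<epsilon>) * real ((n - d) choose (k - d)) \<le> real (min_deg {..<n} E d)"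
    for n E
  proof -
    note n = n0[OF that(1)]
    interpret dense_kgraph k d \<epsilon> n E
      using assms(1-3) that(2,3) conjunct1[OF n] by unfold_locales
    obtain \<A> where "finite \<A>" "card \<A> = nat \<lfloor>\<beta> * real n\<rfloor>"
      "\<forall>T\<in>\<A>. absorbing_tuple_of k {..<n} E T" "tuples_vertex_disjoint \<A>"
      "\<forall>w ws. ordered_tuple k {..<n} w ws \<longrightarrow> \<rho> * real n \<le> card (absorbing_set k E w ws \<inter> \<A>)"
      using absorbing_family_exists[OF conjunct1[OF conjunct2[OF n]] conjunct2[OF conjunct2[OF n]]]
      by blast
    moreover have "real (nat \<lfloor>\<beta> * real n\<rfloor>) \<le> \<beta> * real n"
      using assms(4) by (simp add: nat_floor_bounds)
    ultimately show ?thesis by auto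
  qed
  then show ?thesis by blast
qed

theorem lemma6p3:
  fixes k d :: nat and \<epsilon> :: real
  assumes "1 \<le> d" and "d < k" and "\<epsilon> > 0"
  shows "\<exists>\<beta>0 > 0. \<forall>\<beta>. 0 < \<beta> \<and> \<beta> \<le> \<beta>0 \<longrightarrow>
          (\<exists>\<rho>0 > 0. \<forall>\<rho>. 0 < \<rho> \<and> \<rho> \<le> \<rho>0 \<longrightarrow>
            (\<exists>n0::nat. \<forall>n \<ge> n0. \<forall>E :: nat set set.
               kgraph k {..<n} E \<longrightarrow>
               real (min_deg {..<n} E d) \<ge> (1/2 + \<epsilon>) * real ((n - d) choose (k - d)) \<longrightarrow>
               (\<exists>\<A>. finite \<A> \<and> (\<forall>T\<in>\<A>. absorbing_tuple_of k {..<n} E T) \<and>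
                   tuples_vertex_disjoint \<A> \<and>
                   real (card \<A>) \<le> \<beta> * real n \<and>
                   (\<forall>w ws. ordered_tuple k {..<n} w ws \<longrightarrow>
                      real (card (absorbing_set k E w ws \<inter> \<A>)) \<ge> \<rho> * real n))))"
proof -
  have "0 < \<epsilon> / (4 * real k * real (k - 1) ^ k)" using assms by simp
  moreover have "0 < \<beta> * absorption_rate k \<epsilon> / 8" if "0 < \<beta>" for \<beta>
    using that absorption_rate_pos[OF assms(3)] assms(1,2) by simp
  ultimately show ?thesis
    using absorbing_family_for_large_n[OF assms] by blast
qed

end
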